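(* Let $1\le r\le n$ and let $\mathsf{X}\in\mathbb{R}^{n\times r}$ have unit-norm, linearly independent columns. Let $Y$ be the random subset of $\{1,\dots,n\}$ associated with $|\mathrm{columns}(\mathsf{X})\rangle$, as defined in the context. Then, for every $\mathtt{C}\subseteq\{1,\dots,n\}$ with $|\mathtt{C}|=r$, $$\mathbb{P}\big(Y=\mathtt{C}\,\big|\,|Y|=r\big)=\frac{|\det \mathsf{X}_{\mathtt{C}:}|^2}{\det(\mathsf{X}^\top\mathsf{X})}.$$
   Context: Work in $(\mathbb{C}^2)^{\otimes n}$ with computational basis $|b_1\dots b_n\rangle$, $b_i\in\{0,1\}$, where $|0\rangle=(1,0)^\top$ and $|1\rangle=(0,1)^\top$. For $1\le j\le n$, let $c_j=\sigma_z^{\otimes(j-1)}\otimes|0\rangle\langle 1|\otimes I^{\otimes(n-j)}$, with $\sigma_z=\mathrm{diag}(1,-1)$ and $I$ the $2\times2$ identity. Let $c_j^*$ be its adjoint. The vacuum is $|\emptyset\rangle=|0\cdots0\rangle$. For a unit vector $x\in\mathbb{R}^n$, the Clifford loader is $\mathcal{C}(x)=\sum_{i=1}^n x_i(c_i+c_i^* )$; it is a unitary. For $\mathsf{X}\in\mathbb{R}^{n\times r}$ with unit-norm columns $\mathsf{X}_{:1},\dots,\mathsf{X}_{:r}$, set $|\mathrm{columns}(\mathsf{X})\rangle=\mathcal{C}(\mathsf{X}_{:1})\cdots\mathcal{C}(\mathsf{X}_{:r})|\emptyset\rangle$. The associated random subset $Y\subseteq\{1,\dots,n\}$ has law $\mathbb{P}(Y=\mathtt{C})=|\langle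 e_{\mathtt{C}}|\mathrm{columns}(\mathsf{X})\rangle|^2$, where $|e_{\mathtt{C}}\rangle=|b_1\dots b_n\rangle$ with $b_i=1$ iff $i\in\mathtt{C}$. This is the Born-rule outcome of measuring the occupation numbers $N_i=c_i^*c_i$. For $\mathtt{C}$ with $|\mathtt{C}|=r$, $\mathsf{X}_{\mathtt{C}:}$ is the $r\times r$ submatrix of $\mathsf{X}$ with rows indexed by $\mathtt{C}$. *)

theory Defs
  imports "Jordan_Normal_Form.Schur_Decomposition" "Jordan_Normal_Form.DL_Submatrix"
begin

text \<open>Kronecker (tensor) product of matrices, with the standard index convention:
  the left factor carries the most significant index.\<close>
definition kron :: "'a::times mat \<Rightarrow> 'a mat \<Rightarrow> 'a mat" where
  "kron A B = mat (dim_row A * dim_row B) (dim_col A * dim_col B)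
     (\<lambda>(i,j). A $$ (i div dim_row B, j div dim_col B) * B $$ (i mod dim_row B, j mod dim_col B))"

fun kron_list :: "'a::{times,zero,one} mat list \<Rightarrow> 'a mat" where
  "kron_list [] = 1\<^sub>m 1"
| "kron_list (A # As) = kron A (kron_list As)"

definition ket0 :: "complex mat" where "ket0 = mat_of_cols_list 2 [[1, 0]]"
definition ket1 :: "complex mat" where "ket1 = mat_of_cols_list 2 [[0, 1]]"
definition sigma_z :: "complex mat" where "sigma_z = mat_of_rows_list 2 [[1, 0], [0, -1]]"
definition id2 :: "complex mat" where "id2 = 1\<^sub>m 2"

text \<open>Annihilation operator c_j (qubits indexed 0..n-1 here; paper's c_{j+1}).\<close>
definition ann :: "nat \<Rightarrow> nat \<Rightarrow> complex mat" where
  "ann n j = kron_list (replicate j sigma_z @ [ket0 * mat_adjoint ket1] @ replicate (n - j - 1) id2)"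

definition basis_ket :: "nat \<Rightarrow> nat set \<Rightarrow> complex mat" where
  "basis_ket n C = kron_list (map (\<lambda>i. if i \<in> C then ket1 else ket0) [0..<n])"

definition vacuum :: "nat \<Rightarrow> complex mat" where "vacuum n = basis_ket n {}"

definition clifford_loader :: "nat \<Rightarrow> (nat \<Rightarrow> real) \<Rightarrow> complex mat" where
  "clifford_loader n x = foldr (\<lambda>i M. complex_of_real (x i) \<cdot>\<^sub>m (ann n i + mat_adjoint (ann n i)) + M)
      [0..<n] (0\<^sub>m (2 ^ n) (2 ^ n))"

definition columns_state :: "real mat \<Rightarrow> complex mat" where
  "columns_state X = foldr (\<lambda>k v. clifford_loader (dim_row X) (\<lambda>i. X $$ (i, k)) * v)
      [0..<dim_col X] (vacuum (dim_row X))"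

text \<open>Born rule: P(Y = C) = |<e_C|columns(X)>|^2.\<close>
definition prob_Y :: "real mat \<Rightarrow> nat set \<Rightarrow> real" where
  "prob_Y X C = (cmod ((mat_adjoint (basis_ket (dim_row X) C) * columns_state X) $$ (0,0)))\<^sup>2"

definition prob_card_Y :: "real mat \<Rightarrow> nat \<Rightarrow> real" where
  "prob_card_Y X r = (\<Sum>C \<in> {C. C \<subseteq> {0..<dim_row X} \<and> card C = r}. prob_Y X C)"

definition cond_prob_Y :: "real mat \<Rightarrow> nat set \<Rightarrow> nat \<Rightarrow> real" where
  "cond_prob_Y X C r = (if card C = r then prob_Y X C else 0) / prob_card_Y X r"

end

theory Submission
  imports Defs
begin

text \<open>Each loader C(x) = sum_i x_i (c_i + c_i^*) maps a basis state |e_S> to basis states with one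
  mode i added to or removed from S, with the Jordan--Wigner sign (-1)^|{t \<in> S. t < i}|. Loading the
  columns k, ..., r-1 of X onto the vacuum therefore gives each basis state with r - k occupied modes S
  an amplitude obeying the recursion of the Laplace expansion along the first column: it is the minor
  of X with rows S and columns k, ..., r-1. Hence P(Y = C) = (det X_C)^2 for |C| = r, and
  P(|Y| = r) = sum_{|C| = r} (det X_C)^2 = det (X^T X) by the Cauchy--Binet formula.\<close>

subsection \<open>Kronecker products\<close>

lemma sum_lessThan_mult_div_mod:
  fixes b d :: nat
  shows "(\<Sum>k<b * d. g (k div d) (k mod d)) = (\<Sum>p<b. \<Sum>q<d. g p q :: 'a::comm_monoid_add)"
proof -
  have "(\<Sum>k<b * d. g (k div d) (k mod d)) = (\<Sum>(p, q)\<in>{..<b} \<times> {..<d}. g p q)"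
  proof (rule sum.reindex_bij_witness[where i = "\<lambda>(p, q). p * d + q" and j = "\<lambda>k. (k div d, k mod d)"])
    fix k assume "k \<in> {..<b * d}"
    then show "(k div d, k mod d) \<in> {..<b} \<times> {..<d}"
      by (cases "d = 0") (auto simp: less_mult_imp_div_less)
  next
    fix pq assume "pq \<in> {..<b} \<times> {..<d}"
    then obtain p q where pq: "pq = (p, q)" "p < b" "q < d" by auto
    have "p * d + q < Suc p * d" using pq by simp
    also have "\<dots> \<le> b * d" using pq by (intro mult_le_mono1) simp
    finally show "(case pq of (p, q) \<Rightarrow> p * d + q) \<in> {..<b * d}" using pq by simp
    show "((case pq of (p, q) \<Rightarrow> p * d + q) div d, (case pq of (p, q) \<Rightarrow> p * d + q) mod d) = pq"
      using pq by simp
  qed auto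
  then show ?thesis by (simp add: sum.cartesian_product)
qed

lemma dim_kron [simp]:
  "dim_row (kron A B) = dim_row A * dim_row B"
  "dim_col (kron A B) = dim_col A * dim_col B"
  unfolding kron_def by simp_all

lemma index_kron:
  "i < dim_row A * dim_row B \<Longrightarrow> j < dim_col A * dim_col B \<Longrightarrow>
   kron A B $$ (i, j) = A $$ (i div dim_row B, j div dim_col B) * B $$ (i mod dim_row B, j mod dim_col B)"
  unfolding kron_def by simp

lemma div_mod_less_mult:
  fixes i :: nat
  assumes "i < a * c"
  shows "i div c < a" "i mod c < c"
  using assms by (cases c; simp add: less_mult_imp_div_less)+

lemma kron_mult:
  fixes A :: "'a::comm_semiring_0 mat"
  assumes A: "A \<in> carrier_mat a b" and B: "B \<in> carrier_mat c d"
    and C: "C \<in> carrier_mat b e" and D: "D \<in> carrier_mat d f"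
  shows "kron A B * kron C D = kron (A * C) (B * D)"
proof (rule eq_matI)
  fix i j assume "i < dim_row (kron (A * C) (B * D))" "j < dim_col (kron (A * C) (B * D))"
  then have i: "i < a * c" and j: "j < e * f" using A B C D by auto
  have "(kron A B * kron C D) $$ (i, j) = (\<Sum>k<b * d. kron A B $$ (i, k) * kron C D $$ (k, j))"
    using A B C D i j by (simp add: scalar_prod_def lessThan_atLeast0 ac_simps)
  also have "\<dots> = (\<Sum>k<b * d. A $$ (i div c, k div d) * B $$ (i mod c, k mod d) *
      (C $$ (k div d, j div f) * D $$ (k mod d, j mod f)))"
    using A B C D i j by (intro sum.cong) (auto simp: index_kron)
  also have "\<dots> = (\<Sum>p<b. \<Sum>q<d. A $$ (i div c, p) * B $$ (i mod c, q) * (C $$ (p, j div f) * D $$ (q, j mod f)))"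
    by (rule sum_lessThan_mult_div_mod)
  also have "\<dots> = (\<Sum>p<b. A $$ (i div c, p) * C $$ (p, j div f)) * (\<Sum>q<d. B $$ (i mod c, q) * D $$ (q, j mod f))"
    by (simp add: sum_product ac_simps)
  also have "\<dots> = kron (A * C) (B * D) $$ (i, j)"
    using A B C D i j div_mod_less_mult[OF i] div_mod_less_mult[OF j]
    by (auto simp: index_kron scalar_prod_def lessThan_atLeast0)
  finally show "(kron A B * kron C D) $$ (i, j) = kron (A * C) (B * D) $$ (i, j)" .
qed (use A B C D in auto)

lemma kron_smult_left: "kron (a \<cdot>\<^sub>m A) B = a \<cdot>\<^sub>m kron A (B :: 'a::comm_semiring_0 mat)"
  by (rule eq_matI) (auto simp: index_kron div_mod_less_mult ac_simps)

lemma kron_smult_right: "kron A (b \<cdot>\<^sub>m B) = b \<cdot>\<^sub>m kron A (B :: 'a::comm_semiring_0 mat)"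
  by (rule eq_matI) (auto simp: index_kron div_mod_less_mult ac_simps)

lemma dim_mat_adjoint [simp]:
  "dim_row (mat_adjoint A) = dim_col A" "dim_col (mat_adjoint A) = dim_row A"
  unfolding mat_adjoint_def by auto

lemma mat_adjoint_carrier: "A \<in> carrier_mat a b \<Longrightarrow> mat_adjoint A \<in> carrier_mat b a"
  by auto

lemma index_mat_adjoint:
  "i < dim_col A \<Longrightarrow> j < dim_row A \<Longrightarrow> mat_adjoint (A :: complex mat) $$ (i, j) = cnj (A $$ (j, i))"
  unfolding mat_adjoint_def by (simp add: mat_of_rows_index)

lemma mat_adjoint_adjoint [simp]: "mat_adjoint (mat_adjoint (A :: complex mat)) = A"
  by (rule eq_matI) (auto simp: index_mat_adjoint)

lemma mat_adjoint_kron: "mat_adjoint (kron A B) = kron (mat_adjoint A) (mat_adjoint (B :: complex mat))"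
  by (rule eq_matI) (auto simp: index_kron index_mat_adjoint div_mod_less_mult)

lemma kron_list_carrier:
  "\<forall>t \<in> set ts. F t \<in> carrier_mat a b \<Longrightarrow>
   kron_list (map F ts) \<in> carrier_mat (a ^ length ts) (b ^ length ts)"
  by (induction ts) (auto simp: kron_def)

lemma kron_list_mult:
  fixes F :: "'b \<Rightarrow> 'a::comm_ring_1 mat"
  assumes "\<forall>t \<in> set ts. F t \<in> carrier_mat a b" "\<forall>t \<in> set ts. G t \<in> carrier_mat b c"
  shows "kron_list (map F ts) * kron_list (map G ts) = kron_list (map (\<lambda>t. F t * G t) ts)"
  using assms
proof (induction ts)
  case (Cons t ts)
  have "kron (F t) (kron_list (map F ts)) * kron (G t) (kron_list (map G ts)) =
      kron (F t * G t) (kron_list (map F ts) * kron_list (map G ts))"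
    using Cons.prems by (intro kron_mult[OF _ kron_list_carrier _ kron_list_carrier]) auto
  with Cons show ?case by simp
qed simp

lemma mat_adjoint_kron_list:
  "mat_adjoint (kron_list (map F ts)) = kron_list (map (\<lambda>t. mat_adjoint (F t :: complex mat)) ts)"
proof (induction ts)
  case Nil
  show ?case by (auto simp: index_mat_adjoint)
qed (simp add: mat_adjoint_kron)

lemma kron_list_smult:
  "kron_list (map (\<lambda>t. c t \<cdot>\<^sub>m F t) ts) =
   prod_list (map c ts) \<cdot>\<^sub>m kron_list (map F ts :: 'a::comm_ring_1 mat list)"
  by (induction ts) (auto simp: kron_smult_left kron_smult_right mult.commute)

lemma kron_list_one: "kron_list (map (\<lambda>t. 1\<^sub>m 1) ts) = (1\<^sub>m 1 :: 'a::comm_ring_1 mat)"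
  by (induction ts) (auto simp: index_kron)

definition qubit :: "bool \<Rightarrow> complex mat" where
  "qubit b = (if b then ket1 else ket0)"

definition lowering :: "complex mat" where
  "lowering = ket0 * mat_adjoint ket1"

lemma sum_upt_2: "(\<Sum>i::nat = 0..<2. f i) = f 0 + (f 1 :: 'a::comm_monoid_add)"
  by (simp add: numeral_2_eq_2)

lemma ket0_eq: "ket0 = mat 2 1 (\<lambda>(i, j). if i = 0 then 1 else 0)"
  unfolding ket0_def mat_of_cols_list_def by (rule eq_matI) (auto simp: less_2_cases_iff)

lemma ket1_eq: "ket1 = mat 2 1 (\<lambda>(i, j). if i = 1 then 1 else 0)"
  unfolding ket1_def mat_of_cols_list_def by (rule eq_matI) (auto simp: less_2_cases_iff)

lemma qubit_eq: "qubit b = mat 2 1 (\<lambda>(i, j). if i = (if b then 1 else 0) then 1 else 0)"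
  unfolding qubit_def ket0_eq ket1_eq by auto

lemma sigma_z_eq: "sigma_z = mat 2 2 (\<lambda>(i, j). if i = j then (if i = 0 then 1 else -1) else 0)"
  unfolding sigma_z_def mat_of_rows_list_def by (rule eq_matI) (auto simp: less_2_cases_iff)

lemma id2_eq: "id2 = mat 2 2 (\<lambda>(i, j). if i = j then 1 else 0)"
  unfolding id2_def by (rule eq_matI) auto

lemma lowering_eq: "lowering = mat 2 2 (\<lambda>(i, j). if i = 0 \<and> j = 1 then 1 else 0)"
  unfolding lowering_def ket0_eq ket1_eq
  by (rule eq_matI) (auto simp: less_2_cases_iff index_mat_adjoint scalar_prod_def)

lemma sigma_z_carrier [simp]: "sigma_z \<in> carrier_mat 2 2"
  and id2_carrier [simp]: "id2 \<in> carrier_mat 2 2"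
  and lowering_carrier [simp]: "lowering \<in> carrier_mat 2 2"
  by (simp_all add: sigma_z_eq id2_eq lowering_eq)

lemma mat_adjoint_sigma_z: "mat_adjoint sigma_z = sigma_z"
  and mat_adjoint_id2: "mat_adjoint id2 = id2"
  by (rule eq_matI; auto simp: sigma_z_eq id2_eq index_mat_adjoint less_2_cases_iff)+

lemma sigma_z_mult_qubit: "sigma_z * qubit b = (if b then -1 else 1) \<cdot>\<^sub>m qubit b"
  by (rule eq_matI) (auto simp: sigma_z_eq qubit_eq less_2_cases_iff scalar_prod_def sum_upt_2)

lemma id2_mult_qubit: "id2 * qubit b = 1 \<cdot>\<^sub>m qubit b"
  by (rule eq_matI) (auto simp: id2_eq qubit_eq less_2_cases_iff scalar_prod_def sum_upt_2)

lemma lowering_mult_qubit: "lowering * qubit b = (if b then 1 else 0) \<cdot>\<^sub>m qubit False"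
  by (rule eq_matI) (auto simp: lowering_eq qubit_eq less_2_cases_iff scalar_prod_def sum_upt_2)

lemma mat_adjoint_lowering_mult_qubit: "mat_adjoint lowering * qubit b = (if b then 0 else 1) \<cdot>\<^sub>m qubit True"
  by (rule eq_matI)
    (auto simp: lowering_eq qubit_eq index_mat_adjoint less_2_cases_iff scalar_prod_def sum_upt_2)

lemma mat_adjoint_qubit_mult_qubit: "mat_adjoint (qubit a) * qubit b = (if a = b then 1 else 0) \<cdot>\<^sub>m 1\<^sub>m 1"
  by (rule eq_matI, cases a; cases b; simp add: qubit_eq index_mat_adjoint scalar_prod_def sum_upt_2)

subsection \<open>The Jordan--Wigner annihilation operators on basis states\<close>

definition jw_sign :: "nat set \<Rightarrow> nat \<Rightarrow> complex" where
  "jw_sign S j = (-1) ^ card {t \<in> S. t < j}"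

definition ann_factor :: "nat \<Rightarrow> nat \<Rightarrow> complex mat" where
  "ann_factor j t = (if t < j then sigma_z else if t = j then lowering else id2)"

lemma ann_eq_kron_list: "j < n \<Longrightarrow> ann n j = kron_list (map (ann_factor j) [0..<n])"
  unfolding ann_def lowering_def[symmetric]
  by (rule arg_cong[where f = kron_list], rule nth_equalityI) (auto simp: nth_append ann_factor_def)

lemma basis_ket_eq_kron_list: "basis_ket n S = kron_list (map (\<lambda>t. qubit (t \<in> S)) [0..<n])"
  unfolding basis_ket_def qubit_def by simp

lemma basis_ket_carrier: "basis_ket n S \<in> carrier_mat (2 ^ n) 1"
  unfolding basis_ket_eq_kron_list using kron_list_carrier[of "[0..<n]" "\<lambda>t. qubit (t \<in> S)" 2 1] by (simp add: qubit_eq)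

lemma ann_carrier: "j < n \<Longrightarrow> ann n j \<in> carrier_mat (2 ^ n) (2 ^ n)"
  unfolding ann_eq_kron_list using kron_list_carrier[of "[0..<n]" "ann_factor j" 2 2]
  by (simp add: ann_factor_def)

lemma prod_jw_string:
  assumes "j < n"
  shows "(\<Prod>t = 0..<n. if t < j then if t \<in> S then -1 else 1 else if t = j then a else 1) = jw_sign S j * a"
    (is "prod ?c _ = _")
proof -
  have "prod ?c {0..<n} = prod ?c {0..<Suc j}"
    using assms by (intro prod.mono_neutral_right) auto
  also have "\<dots> = (\<Prod>t \<in> {0..<j} \<inter> S. -1) * a"
    by (simp add: prod.If_cases)
  also have "{0..<j} \<inter> S = {t \<in> S. t < j}" by auto
  finally show ?thesis by (simp add: jw_sign_def)
qed

lemma kron_list_mult_basis_ket: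
  assumes "\<And>t. t < n \<Longrightarrow> F t \<in> carrier_mat 2 2"
    and "\<And>t. t < n \<Longrightarrow> F t * qubit (t \<in> S) = c t \<cdot>\<^sub>m qubit (t \<in> T)"
  shows "kron_list (map F [0..<n]) * basis_ket n S = prod c {0..<n} \<cdot>\<^sub>m basis_ket n T"
proof -
  have "kron_list (map F [0..<n]) * basis_ket n S = kron_list (map (\<lambda>t. F t * qubit (t \<in> S)) [0..<n])"
    unfolding basis_ket_eq_kron_list
    by (rule kron_list_mult[where a = 2 and b = 2 and c = 1]) (auto simp: assms(1) qubit_eq)
  also have "\<dots> = kron_list (map (\<lambda>t. c t \<cdot>\<^sub>m qubit (t \<in> T)) [0..<n])"
    by (intro arg_cong[where f = kron_list] map_cong) (auto simp: assms(2))
  also have "\<dots> = prod c {0..<n} \<cdot>\<^sub>m basis_ket n T"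
    by (simp add: kron_list_smult basis_ket_eq_kron_list prod.distinct_set_conv_list[symmetric])
  finally show ?thesis .
qed

lemma ann_mult_basis_ket:
  assumes j: "j < n"
  shows "ann n j * basis_ket n S = (if j \<in> S then jw_sign S j else 0) \<cdot>\<^sub>m basis_ket n (S - {j})"
proof -
  have "ann n j * basis_ket n S = (\<Prod>t = 0..<n. if t < j then if t \<in> S then -1 else 1
      else if t = j then if j \<in> S then 1 else 0 else 1) \<cdot>\<^sub>m basis_ket n (S - {j})"
    unfolding ann_eq_kron_list[OF j]
    by (rule kron_list_mult_basis_ket)
      (auto simp: ann_factor_def sigma_z_mult_qubit lowering_mult_qubit id2_mult_qubit)
  then show ?thesis by (simp add: prod_jw_string[OF j])
qed

lemma mat_adjoint_ann_mult_basis_ket: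
  assumes j: "j < n"
  shows "mat_adjoint (ann n j) * basis_ket n S =
    (if j \<notin> S then jw_sign S j else 0) \<cdot>\<^sub>m basis_ket n (insert j S)"
proof -
  have "mat_adjoint (ann n j) * basis_ket n S = (\<Prod>t = 0..<n. if t < j then if t \<in> S then -1 else 1
      else if t = j then if j \<in> S then 0 else 1 else 1) \<cdot>\<^sub>m basis_ket n (insert j S)"
    unfolding ann_eq_kron_list[OF j] mat_adjoint_kron_list
    by (rule kron_list_mult_basis_ket)
      (auto simp: ann_factor_def mat_adjoint_sigma_z mat_adjoint_id2 sigma_z_mult_qubit
        mat_adjoint_lowering_mult_qubit id2_mult_qubit intro: mat_adjoint_carrier)
  then show ?thesis by (simp add: prod_jw_string[OF j])
qed

lemma mat_adjoint_basis_ket_mult_basis_ket: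
  assumes "S \<subseteq> {0..<n}" "T \<subseteq> {0..<n}"
  shows "mat_adjoint (basis_ket n S) * basis_ket n T = (if S = T then 1 else 0) \<cdot>\<^sub>m 1\<^sub>m 1"
proof -
  define c where "c t = (if (t \<in> S) = (t \<in> T) then 1 else 0 :: complex)" for t
  have "mat_adjoint (basis_ket n S) * basis_ket n T =
      kron_list (map (\<lambda>t. mat_adjoint (qubit (t \<in> S)) * qubit (t \<in> T)) [0..<n])"
    unfolding basis_ket_eq_kron_list mat_adjoint_kron_list
    by (rule kron_list_mult[where a = 1 and b = 2 and c = 1]) (auto simp: qubit_eq)
  also have "\<dots> = kron_list (map (\<lambda>t. c t \<cdot>\<^sub>m 1\<^sub>m 1) [0..<n])"
    by (simp add: mat_adjoint_qubit_mult_qubit c_def)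
  also have "\<dots> = prod c {0..<n} \<cdot>\<^sub>m 1\<^sub>m 1"
    unfolding kron_list_smult kron_list_one by (simp add: prod.distinct_set_conv_list[symmetric])
  also have "prod c {0..<n} = (if S = T then 1 else 0)"
    using assms by (auto simp: c_def prod_zero_iff)
  finally show ?thesis .
qed

definition braket :: "complex mat \<Rightarrow> complex mat \<Rightarrow> complex" where
  "braket w v = (mat_adjoint w * v) $$ (0, 0)"

lemma braket_eq_sum:
  assumes "w \<in> carrier_mat N 1" "v \<in> carrier_mat N 1"
  shows "braket w v = (\<Sum>k<N. cnj (w $$ (k, 0)) * v $$ (k, 0))"
  using assms by (simp add: braket_def scalar_prod_def index_mat_adjoint lessThan_atLeast0)

lemma braket_add_right:
  assumes "w \<in> carrier_mat N 1" "u \<in> carrier_mat N 1" "v \<in> carrier_mat N 1"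
  shows "braket w (u + v) = braket w u + braket w v"
  using assms by (simp add: braket_eq_sum[of _ N] sum.distrib distrib_left)

lemma braket_smult_right:
  assumes "w \<in> carrier_mat N 1" "v \<in> carrier_mat N 1"
  shows "braket w (a \<cdot>\<^sub>m v) = a * braket w v"
  using assms by (simp add: braket_eq_sum[of _ N] sum_distrib_left ac_simps)

lemma braket_smult_left:
  assumes "w \<in> carrier_mat N 1" "v \<in> carrier_mat N 1"
  shows "braket (a \<cdot>\<^sub>m w) v = cnj a * braket w v"
  using assms by (simp add: braket_eq_sum[of _ N] sum_distrib_left ac_simps)

lemma braket_mult_right:
  assumes w: "w \<in> carrier_mat N 1" and A: "A \<in> carrier_mat N N" and v: "v \<in> carrier_mat N 1"
  shows "braket w (A * v) = braket (mat_adjoint A * w) v"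
proof -
  have "braket w (A * v) = (\<Sum>k<N. \<Sum>l<N. cnj (w $$ (k, 0)) * A $$ (k, l) * v $$ (l, 0))"
    using assms by (simp add: braket_eq_sum[of _ N] scalar_prod_def lessThan_atLeast0
        sum_distrib_left ac_simps)
  also have "\<dots> = (\<Sum>l<N. \<Sum>k<N. cnj (w $$ (k, 0)) * A $$ (k, l) * v $$ (l, 0))"
    by (rule sum.swap)
  also have "\<dots> = braket (mat_adjoint A * w) v"
  proof -
    have "mat_adjoint A * w \<in> carrier_mat N 1"
      using A w by (auto intro: mat_adjoint_carrier)
    then show ?thesis
      using assms by (simp add: braket_eq_sum[of _ N] scalar_prod_def lessThan_atLeast0
          index_mat_adjoint sum_distrib_right sum_distrib_left cnj_sum ac_simps)
  qed
  finally show ?thesis .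
qed

lemma braket_basis_ket_basis_ket:
  assumes "S \<subseteq> {0..<n}" "T \<subseteq> {0..<n}"
  shows "braket (basis_ket n S) (basis_ket n T) = (if S = T then 1 else 0)"
  using mat_adjoint_basis_ket_mult_basis_ket[OF assms] by (simp add: braket_def)

lemma foldr_lincomb_carrier:
  "\<forall>i \<in> set is. B i \<in> carrier_mat N N \<Longrightarrow>
   foldr (\<lambda>i M. a i \<cdot>\<^sub>m B i + M) is (0\<^sub>m N N) \<in> carrier_mat N N"
  by (induction "is") auto

lemma braket_foldr_lincomb:
  assumes B: "\<forall>i \<in> set is. B i \<in> carrier_mat N N"
    and w: "w \<in> carrier_mat N 1" and v: "v \<in> carrier_mat N 1"
  shows "braket w (foldr (\<lambda>i M. a i \<cdot>\<^sub>m B i + M) is (0\<^sub>m N N) * v) =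
    (\<Sum>i\<leftarrow>is. a i * braket w (B i * v))"
  using B
proof (induction "is")
  case Nil
  show ?case using w v by (simp add: braket_eq_sum[of _ N])
next
  case (Cons i "is")
  let ?F = "foldr (\<lambda>i M. a i \<cdot>\<^sub>m B i + M) is (0\<^sub>m N N)"
  have Bi: "B i \<in> carrier_mat N N" and F: "?F \<in> carrier_mat N N"
    using Cons.prems foldr_lincomb_carrier by auto
  have "(a i \<cdot>\<^sub>m B i + ?F) * v = a i \<cdot>\<^sub>m (B i * v) + ?F * v"
    using Bi F v by (simp add: add_mult_distrib_mat[of _ N N] mult_smult_assoc_mat)
  then show ?case
    using Cons Bi F v w by (simp add: braket_add_right[of _ N] braket_smult_right[of _ N])
qed

lemma clifford_loader_carrier: "clifford_loader n x \<in> carrier_mat (2 ^ n) (2 ^ n)"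
  unfolding clifford_loader_def
  by (rule foldr_lincomb_carrier) (auto intro!: add_carrier_mat ann_carrier mat_adjoint_carrier)

lemma braket_clifford_loader:
  assumes w: "w \<in> carrier_mat (2 ^ n) 1" and v: "v \<in> carrier_mat (2 ^ n) 1"
  shows "braket w (clifford_loader n x * v) =
    (\<Sum>j<n. x j * (braket w (ann n j * v) + braket w (mat_adjoint (ann n j) * v)))"
proof -
  have "braket w (clifford_loader n x * v) =
      (\<Sum>j\<leftarrow>[0..<n]. x j * braket w ((ann n j + mat_adjoint (ann n j)) * v))"
    unfolding clifford_loader_def
    by (rule braket_foldr_lincomb[OF _ w v]) (auto intro!: add_carrier_mat ann_carrier mat_adjoint_carrier)
  also have "\<dots> = (\<Sum>j<n. x j * (braket w (ann n j * v) + braket w (mat_adjoint (ann n j) * v)))"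
  proof -
    have "braket w ((ann n j + mat_adjoint (ann n j)) * v) =
        braket w (ann n j * v) + braket w (mat_adjoint (ann n j) * v)" if "j < n" for j
    proof -
      have a: "ann n j \<in> carrier_mat (2 ^ n) (2 ^ n)" "mat_adjoint (ann n j) \<in> carrier_mat (2 ^ n) (2 ^ n)"
        using that by (auto intro: ann_carrier mat_adjoint_carrier)
      show ?thesis
        by (simp add: add_mult_distrib_mat[OF a v]
            braket_add_right[OF w mult_carrier_mat[OF a(1) v] mult_carrier_mat[OF a(2) v]])
    qed
    then show ?thesis by (simp add: interv_sum_list_conv_sum_set_nat atLeast0LessThan)
  qed
  finally show ?thesis .
qed

lemma cnj_jw_sign [simp]: "cnj (jw_sign S j) = jw_sign S j"
  by (simp add: jw_sign_def)

lemma braket_basis_ket_ann: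
  assumes j: "j < n" and v: "v \<in> carrier_mat (2 ^ n) 1"
  shows "braket (basis_ket n S) (ann n j * v) =
    (if j \<notin> S then jw_sign S j * braket (basis_ket n (insert j S)) v else 0)"
  using braket_mult_right[OF basis_ket_carrier ann_carrier[OF j] v]
  by (simp add: mat_adjoint_ann_mult_basis_ket[OF j] braket_smult_left[OF basis_ket_carrier v])

lemma braket_basis_ket_mat_adjoint_ann:
  assumes j: "j < n" and v: "v \<in> carrier_mat (2 ^ n) 1"
  shows "braket (basis_ket n S) (mat_adjoint (ann n j) * v) =
    (if j \<in> S then jw_sign S j * braket (basis_ket n (S - {j})) v else 0)"
  using braket_mult_right[OF basis_ket_carrier mat_adjoint_carrier[OF ann_carrier[OF j]] v]
  by (simp add: ann_mult_basis_ket[OF j] braket_smult_left[OF basis_ket_carrier v])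

lemma braket_basis_ket_clifford_loader:
  assumes S: "S \<subseteq> {..<n}" and v: "v \<in> carrier_mat (2 ^ n) 1"
  shows "braket (basis_ket n S) (clifford_loader n x * v) =
    (\<Sum>j \<in> {..<n} - S. x j * jw_sign S j * braket (basis_ket n (insert j S)) v) +
    (\<Sum>j \<in> S. x j * jw_sign S j * braket (basis_ket n (S - {j})) v)"
proof -
  define up where "up j = x j * jw_sign S j * braket (basis_ket n (insert j S)) v" for j
  define down where "down j = x j * jw_sign S j * braket (basis_ket n (S - {j})) v" for j
  have "braket (basis_ket n S) (clifford_loader n x * v) =
      (\<Sum>j<n. (if j \<notin> S then up j else 0) + (if j \<in> S then down j else 0))"
    unfolding braket_clifford_loader[OF basis_ket_carrier v]
    by (rule sum.cong) (auto simp: braket_basis_ket_ann[OF _ v] braket_basis_ket_mat_adjoint_ann[OF _ v]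
        up_def down_def)
  also have "\<dots> = (\<Sum>j<n. if j \<notin> S then up j else 0) + (\<Sum>j<n. if j \<in> S then down j else 0)"
    by (rule sum.distrib)
  also have "\<dots> = (\<Sum>j \<in> {..<n} - S. up j) + (\<Sum>j \<in> S. down j)"
    using S by (simp add: sum.If_cases Diff_eq Compl_eq Int_absorb1)
  finally show ?thesis by (simp add: up_def down_def)
qed

subsection \<open>Minors\<close>


lemma pick_lessThan_card_image:
  assumes "finite S"
  shows "pick S ` {..<card S} = S"
proof
  show "pick S ` {..<card S} \<subseteq> S" using pick_in_set_le by auto
  show "S \<subseteq> pick S ` {..<card S}"
  proof
    fix j assume j: "j \<in> S"
    have "card {a \<in> S. a < j} < card S"
      using assms j by (intro psubset_card_mono) auto
    then show "j \<in> pick S ` {..<card S}"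
      by (intro image_eqI[where f = "pick S", OF pick_card_in_set[OF j, symmetric]]) simp
  qed
qed

lemma inj_on_pick: "inj_on (pick S) {..<card S}"
proof (rule inj_onI)
  fix a b assume "a \<in> {..<card S}" "b \<in> {..<card S}" "pick S a = pick S b"
  then show "a = b"
    using pick_mono_le[of a S b] pick_mono_le[of b S a] by (cases a b rule: linorder_cases) auto
qed

lemma pick_Diff_pick:
  assumes fin: "finite S" and i: "i < card S" and a: "a < card S - 1"
  shows "pick (S - {pick S i}) a = pick S (if a < i then a else Suc a)"
proof -
  define b where "b = (if a < i then a else Suc a)"
  have b: "b < card S" "b \<noteq> i" using a i by (auto simp: b_def)
  have ne: "pick S b \<noteq> pick S i"
    using inj_on_pick[of S] b i by (auto dest: inj_onD)
  have "{t \<in> S - {pick S i}. t < pick S b} = {t \<in> S. t < pick S b} - {pick S i}" by auto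
  moreover have "pick S i \<in> {t \<in> S. t < pick S b} \<longleftrightarrow> i < b"
    using pick_mono_le[OF i, of b] pick_mono_le[OF b(1), of i] pick_in_set_le[OF i] b
    by (cases i b rule: linorder_cases) auto
  moreover have "finite {t \<in> S. t < pick S b}" using fin by simp
  ultimately have "card {t \<in> S - {pick S i}. t < pick S b} = card {t \<in> S. t < pick S b} - (if i < b then 1 else 0)"
    by (simp add: card_Diff_singleton_if)
  also have "\<dots> = a"
    unfolding card_pick_le[OF b(1)] by (simp add: b_def)
  finally have "card {t \<in> S - {pick S i}. t < pick S b} = a" .
  then have "pick (S - {pick S i}) a = pick (S - {pick S i}) (card {t \<in> S - {pick S i}. t < pick S b})"
    by simp
  also have "\<dots> = pick S b"
    using pick_in_set_le[OF b(1)] ne by (intro pick_card_in_set) auto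
  finally show ?thesis unfolding b_def .
qed

lemma pick_atLeastLessThan:
  assumes "l < m - k"
  shows "pick {k..<m} l = k + l"
proof -
  have "card {a \<in> {k..<m}. a < k + l} = l"
  proof -
    have "{a \<in> {k..<m}. a < k + l} = {k..<k + l}" using assms by auto
    then show ?thesis by simp
  qed
  then show ?thesis
    using pick_card_in_set[of "k + l" "{k..<m}"] assms by auto
qed

lemma card_Collect_less_mem: "I \<subseteq> {..<n} \<Longrightarrow> card {i. i < n \<and> i \<in> I} = card I"
  by (rule arg_cong[where f = card]) auto

lemma submatrix_rows_carrier:
  assumes "A \<in> carrier_mat n m" "I \<subseteq> {..<n}"
  shows "submatrix A I UNIV \<in> carrier_mat (card I) m"
  using carrier_matD[OF assms(1)] card_Collect_less_mem[OF assms(2)]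
  by (intro carrier_matI) (simp_all add: dim_submatrix)

lemma index_submatrix_rows:
  assumes "A \<in> carrier_mat n m" "I \<subseteq> {..<n}" "i < card I" "j < m"
  shows "submatrix A I UNIV $$ (i, j) = A $$ (pick I i, j)"
  using carrier_matD[OF assms(1)] card_Collect_less_mem[OF assms(2)] assms(3,4)
  by (simp add: submatrix_index pick_UNIV)

lemma submatrix_cols_carrier:
  assumes "A \<in> carrier_mat m n" "J \<subseteq> {..<n}"
  shows "submatrix A UNIV J \<in> carrier_mat m (card J)"
  using carrier_matD[OF assms(1)] card_Collect_less_mem[OF assms(2)]
  by (intro carrier_matI) (simp_all add: dim_submatrix)

lemma index_submatrix_cols:
  assumes "A \<in> carrier_mat m n" "J \<subseteq> {..<n}" "i < m" "j < card J"
  shows "submatrix A UNIV J $$ (i, j) = A $$ (i, pick J j)"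
  using carrier_matD[OF assms(1)] card_Collect_less_mem[OF assms(2)] assms(3,4)
  by (simp add: submatrix_index pick_UNIV)

lemma submatrix_trailing_carrier:
  assumes "I \<subseteq> {..<dim_row A}"
  shows "submatrix A I {k..<dim_col A} \<in> carrier_mat (card I) (dim_col A - k)"
proof -
  have "{k..<dim_col A} \<subseteq> {..<dim_col A}" by auto
  from card_Collect_less_mem[OF this] card_Collect_less_mem[OF assms] show ?thesis
    by (intro carrier_matI) (simp_all add: dim_submatrix)
qed

lemma index_submatrix_trailing:
  assumes "I \<subseteq> {..<dim_row A}" "i < card I" "l < dim_col A - k"
  shows "submatrix A I {k..<dim_col A} $$ (i, l) = A $$ (pick I i, k + l)"
proof -
  have "submatrix A I {k..<dim_col A} $$ (i, l) = A $$ (pick I i, pick {k..<dim_col A} l)"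
    using assms submatrix_trailing_carrier[OF assms(1), of k] by (intro submatrix_index) (auto simp: dim_submatrix)
  then show ?thesis using assms(3) by (simp add: pick_atLeastLessThan)
qed

lemma mat_delete_submatrix_trailing:
  assumes I: "I \<subseteq> {..<dim_row A}" and i: "i < card I"
  shows "mat_delete (submatrix A I {k..<dim_col A}) i 0 = submatrix A (I - {pick I i}) {Suc k..<dim_col A}"
proof -
  have fin: "finite I" using I finite_subset by blast
  have I': "I - {pick I i} \<subseteq> {..<dim_row A}" and card': "card (I - {pick I i}) = card I - 1"
    using I fin pick_in_set_le[OF i] by auto
  show ?thesis
  proof (rule eq_matI)
    fix a b assume "a < dim_row (submatrix A (I - {pick I i}) {Suc k..<dim_col A})"
      "b < dim_col (submatrix A (I - {pick I i}) {Suc k..<dim_col A})"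
    then have a: "a < card I - 1" and b: "b < dim_col A - Suc k"
      using submatrix_trailing_carrier[OF I', of "Suc k"] card' by auto
    have "mat_delete (submatrix A I {k..<dim_col A}) i 0 $$ (a, b) =
        submatrix A I {k..<dim_col A} $$ (if a < i then a else Suc a, Suc b)"
      using submatrix_trailing_carrier[OF I, of k] a b by (simp add: mat_delete_def)
    also have "\<dots> = A $$ (pick (I - {pick I i}) a, Suc k + b)"
      using a b i by (simp add: index_submatrix_trailing[OF I] pick_Diff_pick[OF fin])
    also have "\<dots> = submatrix A (I - {pick I i}) {Suc k..<dim_col A} $$ (a, b)"
      using a b card' by (simp add: index_submatrix_trailing[OF I'])
    finally show "mat_delete (submatrix A I {k..<dim_col A}) i 0 $$ (a, b) =
        submatrix A (I - {pick I i}) {Suc k..<dim_col A} $$ (a, b)" .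
  qed (use submatrix_trailing_carrier[OF I, of k] submatrix_trailing_carrier[OF I', of "Suc k"] card' in auto)
qed

lemma det_submatrix_expand_first_column:
  fixes A :: "'a::comm_ring_1 mat"
  assumes S: "S \<subseteq> {..<dim_row A}" and k: "k < dim_col A" and card: "card S = dim_col A - k"
  shows "det (submatrix A S {k..<dim_col A}) =
    (\<Sum>j \<in> S. (-1) ^ card {t \<in> S. t < j} * A $$ (j, k) * det (submatrix A (S - {j}) {Suc k..<dim_col A}))"
    (is "_ = sum ?g S")
proof -
  let ?M = "submatrix A S {k..<dim_col A}"
  have fin: "finite S" using S finite_subset by blast
  have M: "?M \<in> carrier_mat (card S) (card S)"
    using submatrix_trailing_carrier[OF S, of k] card by simp
  have "det ?M = (\<Sum>i < card S. ?M $$ (i, 0) * cofactor ?M i 0)"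
    using M card k by (intro laplace_expansion_column) auto
  also have "\<dots> = (\<Sum>i < card S. ?g (pick S i))"
    using card k by (intro sum.cong)
      (auto simp: cofactor_def mat_delete_submatrix_trailing[OF S] index_submatrix_trailing[OF S] card_pick_le)
  also have "\<dots> = sum ?g S"
    using sum.reindex[OF inj_on_pick[of S], of ?g] by (simp add: pick_lessThan_card_image[OF fin])
  finally show ?thesis .
qed

subsection \<open>The Cauchy--Binet formula\<close>

lemma det_mult_eq_sum_injective_row_selections:
  fixes A :: "'a::comm_ring_1 mat"
  assumes A: "A \<in> carrier_mat m n" and B: "B \<in> carrier_mat n m"
  shows "det (A * B) =
    (\<Sum>f \<in> {f. (\<forall>i \<in> {0..<m}. f i \<in> {0..<n}) \<and> (\<forall>i. i \<notin> {0..<m} \<longrightarrow> f i = i) \<and> inj_on f {0..<m}}.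
      (\<Prod>i = 0..<m. A $$ (i, f i)) * det (mat\<^sub>r m m (\<lambda>i. row B (f i))))"
    (is "_ = (\<Sum>f \<in> ?Inj. ?T f)")
proof -
  let ?F = "{f. (\<forall>i \<in> {0..<m}. f i \<in> {0..<n}) \<and> (\<forall>i. i \<notin> {0..<m} \<longrightarrow> f i = i)}"
  have "det (A * B) = (\<Sum>f \<in> ?F. det (mat\<^sub>r m m (\<lambda>i. A $$ (i, f i) \<cdot>\<^sub>v row B (f i))))"
    unfolding mat_mul_finsum_alt[OF A B] by (rule det_linear_rows_sum) (use B in auto)
  also have "\<dots> = (\<Sum>f \<in> ?F. ?T f)"
    using B by (intro sum.cong refl det_rows_mul) auto
  also have "\<dots> = (\<Sum>f \<in> ?Inj. ?T f)"
  proof (rule sum.mono_neutral_right)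
    show "finite ?F" by (rule finite_bounded_functions) auto
    show "\<forall>f \<in> ?F - ?Inj. ?T f = 0"
    proof
      fix f assume "f \<in> ?F - ?Inj"
      then obtain i j where "i < m" "j < m" "i \<noteq> j" "f i = f j" by (auto simp: inj_on_def)
      then have "det (mat\<^sub>r m m (\<lambda>i. row B (f i))) = 0"
        by (intro det_identical_rows[of _ m i j]) auto
      then show "?T f = 0" by simp
    qed
  qed auto
  finally show ?thesis .
qed

lemma pick_comp_permutes_injective_onto:
  assumes C: "finite C" "card C = m" and p: "p permutes {0..<m}"
  shows "inj_on (\<lambda>i. if i < m then pick C (p i) else i) {0..<m}"
    and "(\<lambda>i. if i < m then pick C (p i) else i) ` {0..<m} = C"
proof -
  have p_less: "i < m \<Longrightarrow> p i < m" for i using permutes_in_image[OF p, of i] by auto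
  show "inj_on (\<lambda>i. if i < m then pick C (p i) else i) {0..<m}"
  proof (rule inj_onI)
    fix a b assume ab: "a \<in> {0..<m}" "b \<in> {0..<m}"
      and "(if a < m then pick C (p a) else a) = (if b < m then pick C (p b) else b)"
    then have "pick C (p a) = pick C (p b)" by simp
    then have "p a = p b" using inj_on_pick[of C] p_less ab C by (auto dest: inj_onD)
    then show "a = b" using permutes_inj[OF p] by (auto dest: injD)
  qed
  have "(\<lambda>i. if i < m then pick C (p i) else i) ` {0..<m} = pick C ` p ` {0..<m}" by auto
  also have "\<dots> = C"
    using permutes_image[OF p] pick_lessThan_card_image[OF C(1)] C(2) by (simp add: lessThan_atLeast0)
  finally show "(\<lambda>i. if i < m then pick C (p i) else i) ` {0..<m} = C" .
qed

lemma rank_comp_injection_permutes: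
  fixes f :: "nat \<Rightarrow> nat"
  assumes C: "finite C" "card C = m" and f: "inj_on f {0..<m}" "f ` {0..<m} = C"
  shows "(\<lambda>i. if i < m then card {t \<in> C. t < f i} else i) permutes {0..<m}"
proof (rule inj_on_nat_permutes)
  have f_C: "i < m \<Longrightarrow> f i \<in> C" for i using f(2) by auto
  show "inj_on (\<lambda>i. if i < m then card {t \<in> C. t < f i} else i) {0..<m}"
  proof (rule inj_onI)
    fix a b assume ab: "a \<in> {0..<m}" "b \<in> {0..<m}"
      and "(if a < m then card {t \<in> C. t < f a} else a) = (if b < m then card {t \<in> C. t < f b} else b)"
    then have "pick C (card {t \<in> C. t < f a}) = pick C (card {t \<in> C. t < f b})" by simp
    then have "f a = f b" using pick_card_in_set[OF f_C] ab by simp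
    then show "a = b" using f(1) ab by (auto dest: inj_onD)
  qed
  have "card {t \<in> C. t < f i} < m" if "i < m" for i
    using C f_C[OF that] by (auto intro!: psubset_card_mono)
  then show "(\<lambda>i. if i < m then card {t \<in> C. t < f i} else i) \<in> {0..<m} \<rightarrow> {0..<m}" by auto
qed auto

lemma sum_injections_onto_eq_sum_permutes:
  assumes C: "finite C" "card C = m"
  shows "(\<Sum>f | (\<forall>i. i \<notin> {0..<m} \<longrightarrow> f i = i) \<and> inj_on f {0..<m} \<and> f ` {0..<m} = C. T f) =
    (\<Sum>p | p permutes {0..<m}. T (\<lambda>i. if i < m then pick C (p i) else i))"
proof (rule sum.reindex_bij_witness[symmetric,
      where j = "\<lambda>p i. if i < m then pick C (p i) else i"
        and i = "\<lambda>f i. if i < m then card {t \<in> C. t < f i} else i"])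
  fix p assume "p \<in> {p. p permutes {0..<m}}"
  then have p: "p permutes {0..<m}" by simp
  show "(\<lambda>i. if i < m then card {t \<in> C. t < (if i < m then pick C (p i) else i)} else i) = p"
  proof
    fix i show "(if i < m then card {t \<in> C. t < (if i < m then pick C (p i) else i)} else i) = p i"
      using permutes_in_image[OF p, of i] permutes_not_in[OF p, of i] card_pick_le[of "p i" C] C by auto
  qed
  show "(\<lambda>i. if i < m then pick C (p i) else i) \<in>
      {f. (\<forall>i. i \<notin> {0..<m} \<longrightarrow> f i = i) \<and> inj_on f {0..<m} \<and> f ` {0..<m} = C}"
    using pick_comp_permutes_injective_onto[OF C p] by auto
next
  fix f assume "f \<in> {f. (\<forall>i. i \<notin> {0..<m} \<longrightarrow> f i = i) \<and> inj_on f {0..<m} \<and> f ` {0..<m} = C}"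
  then have f_id: "\<And>i. m \<le> i \<Longrightarrow> f i = i" and f: "inj_on f {0..<m}" "f ` {0..<m} = C" by auto
  show "(\<lambda>i. if i < m then pick C (if i < m then card {t \<in> C. t < f i} else i) else i) = f"
  proof
    fix i show "(if i < m then pick C (if i < m then card {t \<in> C. t < f i} else i) else i) = f i"
      using f(2) f_id[of i] pick_card_in_set[of "f i" C] by auto
  qed
  show "(\<lambda>i. if i < m then card {t \<in> C. t < f i} else i) \<in> {p. p permutes {0..<m}}"
    using rank_comp_injection_permutes[OF C f] by simp
qed simp

lemma det_rows_pick_permutes:
  assumes B: "B \<in> carrier_mat n m" and C: "C \<subseteq> {..<n}" "card C = m" and p: "p permutes {0..<m}"
  shows "det (mat\<^sub>r m m (\<lambda>i. row B (pick C (p i)))) = signof p * det (submatrix B C UNIV)"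
proof -
  have p_less: "i < m \<Longrightarrow> p i < m" for i using permutes_in_image[OF p, of i] by auto
  have "pick C i < n" if "i < m" for i using pick_in_set_le[of i C] that C by auto
  then have "mat\<^sub>r m m (\<lambda>i. row B (pick C (p i))) = mat m m (\<lambda>(i, j). submatrix B C UNIV $$ (p i, j))"
    using B C p_less by (intro eq_matI) (auto simp: index_submatrix_rows)
  then show ?thesis
    using det_permute_rows[OF _ p] submatrix_rows_carrier[OF B C(1)] C(2) by simp
qed

lemma sum_injections_onto_eq_det_mult_minors:
  fixes A :: "'a::comm_ring_1 mat"
  assumes A: "A \<in> carrier_mat m n" and B: "B \<in> carrier_mat n m"
    and C: "C \<subseteq> {..<n}" "card C = m"
  shows "(\<Sum>f | (\<forall>i. i \<notin> {0..<m} \<longrightarrow> f i = i) \<and> inj_on f {0..<m} \<and> f ` {0..<m} = C.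
      (\<Prod>i = 0..<m. A $$ (i, f i)) * det (mat\<^sub>r m m (\<lambda>i. row B (f i)))) =
    det (submatrix A UNIV C) * det (submatrix B C UNIV)"
proof -
  let ?P = "{p. p permutes {0..<m}}"
  have fin: "finite C" using C finite_subset by blast
  have "mat\<^sub>r m m (\<lambda>i. row B (if i < m then pick C (p i) else i)) = mat\<^sub>r m m (\<lambda>i. row B (pick C (p i)))"
    for p :: "nat \<Rightarrow> nat"
    by (rule eq_matI) auto
  then have "(\<Sum>f | (\<forall>i. i \<notin> {0..<m} \<longrightarrow> f i = i) \<and> inj_on f {0..<m} \<and> f ` {0..<m} = C.
      (\<Prod>i = 0..<m. A $$ (i, f i)) * det (mat\<^sub>r m m (\<lambda>i. row B (f i)))) =
    (\<Sum>p \<in> ?P. (\<Prod>i = 0..<m. A $$ (i, pick C (p i))) * det (mat\<^sub>r m m (\<lambda>i. row B (pick C (p i)))))"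
    by (subst sum_injections_onto_eq_sum_permutes[OF fin C(2)]) (auto intro!: sum.cong prod.cong)
  also have "\<dots> = (\<Sum>p \<in> ?P. signof p * (\<Prod>i = 0..<m. submatrix A UNIV C $$ (i, p i))) *
      det (submatrix B C UNIV)"
    unfolding sum_distrib_right
  proof (rule sum.cong[OF refl])
    fix p assume "p \<in> ?P"
    then have p: "p permutes {0..<m}" by simp
    have "(\<Prod>i = 0..<m. A $$ (i, pick C (p i))) = (\<Prod>i = 0..<m. submatrix A UNIV C $$ (i, p i))"
      using permutes_in_image[OF p] A C by (intro prod.cong) (auto simp: index_submatrix_cols)
    then show "(\<Prod>i = 0..<m. A $$ (i, pick C (p i))) * det (mat\<^sub>r m m (\<lambda>i. row B (pick C (p i)))) =
        signof p * (\<Prod>i = 0..<m. submatrix A UNIV C $$ (i, p i)) * det (submatrix B C UNIV)"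
      by (simp add: det_rows_pick_permutes[OF B C p])
  qed
  also have "\<dots> = det (submatrix A UNIV C) * det (submatrix B C UNIV)"
    using submatrix_cols_carrier[OF A C(1)] C(2) by (simp add: det_def')
  finally show ?thesis .
qed

theorem cauchy_binet:
  fixes A :: "'a::comm_ring_1 mat"
  assumes A: "A \<in> carrier_mat m n" and B: "B \<in> carrier_mat n m"
  shows "det (A * B) = (\<Sum>C | C \<subseteq> {0..<n} \<and> card C = m. det (submatrix A UNIV C) * det (submatrix B C UNIV))"
proof -
  let ?Inj = "{f. (\<forall>i \<in> {0..<m}. f i \<in> {0..<n}) \<and> (\<forall>i. i \<notin> {0..<m} \<longrightarrow> f i = i) \<and> inj_on f {0..<m}}"
  let ?T = "\<lambda>f. (\<Prod>i = 0..<m. A $$ (i, f i)) * det (mat\<^sub>r m m (\<lambda>i. row B (f i)))"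
  let ?Cs = "{C. C \<subseteq> {0..<n} \<and> card C = m}"
  have "det (A * B) = (\<Sum>f \<in> ?Inj. ?T f)"
    by (rule det_mult_eq_sum_injective_row_selections[OF A B])
  also have "\<dots> = (\<Sum>C \<in> ?Cs. \<Sum>f \<in> {f \<in> ?Inj. f ` {0..<m} = C}. ?T f)"
  proof (rule sum.group[symmetric])
    show "finite ?Inj" by (rule finite_subset[OF _ finite_bounded_functions[of "{0..<n}" "{0..<m}"]]) auto
    show "finite ?Cs" by (rule finite_subset[of _ "Pow {0..<n}"]) auto
    show "(\<lambda>f. f ` {0..<m}) ` ?Inj \<subseteq> ?Cs" by (auto simp: card_image)
  qed
  also have "\<dots> = (\<Sum>C \<in> ?Cs. det (submatrix A UNIV C) * det (submatrix B C UNIV))"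
  proof (rule sum.cong[OF refl])
    fix C assume C: "C \<in> ?Cs"
    then have "{f \<in> ?Inj. f ` {0..<m} = C} =
        {f. (\<forall>i. i \<notin> {0..<m} \<longrightarrow> f i = i) \<and> inj_on f {0..<m} \<and> f ` {0..<m} = C}"
      by blast
    then show "(\<Sum>f \<in> {f \<in> ?Inj. f ` {0..<m} = C}. ?T f) = det (submatrix A UNIV C) * det (submatrix B C UNIV)"
      using sum_injections_onto_eq_det_mult_minors[OF A B] C by (simp add: atLeast0LessThan)
  qed
  finally show ?thesis .
qed

subsection \<open>Amplitudes of the loaded state\<close>

definition loaded_state :: "real mat \<Rightarrow> nat \<Rightarrow> complex mat" where
  "loaded_state X k = foldr (\<lambda>l v. clifford_loader (dim_row X) (\<lambda>i. X $$ (i, l)) * v)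
      [k..<dim_col X] (vacuum (dim_row X))"

lemma columns_state_eq_loaded_state: "columns_state X = loaded_state X 0"
  by (simp add: columns_state_def loaded_state_def)

lemma loaded_state_carrier: "loaded_state X k \<in> carrier_mat (2 ^ dim_row X) 1"
proof -
  have "foldr (\<lambda>l v. clifford_loader (dim_row X) (\<lambda>i. X $$ (i, l)) * v) ls (vacuum (dim_row X))
      \<in> carrier_mat (2 ^ dim_row X) 1" for ls
  proof (induction ls)
    case Nil
    show ?case using basis_ket_carrier[of _ "{}"] by (simp add: vacuum_def)
  qed (auto intro!: mult_carrier_mat[OF clifford_loader_carrier])
  then show ?thesis unfolding loaded_state_def .
qed

lemma loaded_state_Suc:
  "k < dim_col X \<Longrightarrow> loaded_state X k = clifford_loader (dim_row X) (\<lambda>i. X $$ (i, k)) * loaded_state X (Suc k)"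
  by (simp add: loaded_state_def upt_conv_Cons)

text \<open>Nothing is claimed for fewer than r - k occupied modes: the loaders are involutions, so such
  amplitudes need not vanish.\<close>
lemma braket_basis_ket_loaded_state:
  assumes "k \<le> dim_col X" "S \<subseteq> {..<dim_row X}" "dim_col X - k \<le> card S"
  shows "braket (basis_ket (dim_row X) S) (loaded_state X k) =
    (if card S = dim_col X - k then complex_of_real (det (submatrix X S {k..<dim_col X})) else 0)"
  using assms
proof (induction k arbitrary: S rule: inc_induct)
  case base
  have "S \<subseteq> {0..<dim_row X}" "finite S" using base.prems finite_subset by auto
  then show ?case
    by (auto simp: loaded_state_def vacuum_def braket_basis_ket_basis_ket dim_submatrix
        intro!: det_dim_zero carrier_matI)
next
  case (step k)
  let ?n = "dim_row X" and ?r = "dim_col X"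
  let ?v = "loaded_state X (Suc k)"
  have S: "S \<subseteq> {..<?n}" and card_S: "?r - k \<le> card S" by fact+
  have fin: "finite S" using S finite_subset by blast
  have up: "braket (basis_ket ?n (insert j S)) ?v = 0" if "j \<in> {..<?n} - S" for j
    using step.IH[of "insert j S"] that S card_S fin by auto
  have down: "braket (basis_ket ?n (S - {j})) ?v =
      (if card S = ?r - k then complex_of_real (det (submatrix X (S - {j}) {Suc k..<?r})) else 0)" if "j \<in> S" for j
  proof -
    have "card (S - {j}) = card S - 1" "S - {j} \<subseteq> {..<?n}" "?r - Suc k \<le> card (S - {j})"
      using that fin S card_S step.hyps by auto
    then show ?thesis using step.IH[of "S - {j}"] card_S step.hyps by auto
  qed
  have "braket (basis_ket ?n S) (loaded_state X k) =
      (\<Sum>j \<in> S. X $$ (j, k) * jw_sign S j * braket (basis_ket ?n (S - {j})) ?v)"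
    by (simp add: loaded_state_Suc[OF step.hyps(2)] braket_basis_ket_clifford_loader[OF S loaded_state_carrier] up)
  also have "\<dots> = (if card S = ?r - k then complex_of_real (det (submatrix X S {k..<?r})) else 0)"
  proof (cases "card S = ?r - k")
    case True
    have "(\<Sum>j \<in> S. X $$ (j, k) * jw_sign S j * braket (basis_ket ?n (S - {j})) ?v) =
        complex_of_real (\<Sum>j \<in> S. (-1) ^ card {t \<in> S. t < j} * X $$ (j, k) * det (submatrix X (S - {j}) {Suc k..<?r}))"
      using True by (simp add: down jw_sign_def ac_simps)
    also have "\<dots> = complex_of_real (det (submatrix X S {k..<?r}))"
      using det_submatrix_expand_first_column[OF S _ True] step.hyps by simp
    finally show ?thesis using True by simp
  qed (simp add: down)
  finally show ?case .
qed

lemma prob_Y_eq_det_square: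
  assumes X: "X \<in> carrier_mat n r" and C: "C \<subseteq> {0..<n}" "card C = r"
  shows "prob_Y X C = (det (submatrix X C UNIV))\<^sup>2"
proof -
  have "submatrix X C {0..<r} = submatrix X C UNIV"
    using X by (intro eq_matI) (auto simp: dim_submatrix submatrix_index pick_UNIV pick_atLeastLessThan)
  then have "braket (basis_ket n C) (columns_state X) = complex_of_real (det (submatrix X C UNIV))"
    using braket_basis_ket_loaded_state[of 0 X C] X C by (auto simp: columns_state_eq_loaded_state atLeast0LessThan)
  then show ?thesis
    using X by (simp add: prob_Y_def braket_def[symmetric])
qed

lemma det_gram_eq_sum_squared_minors:
  assumes X: "X \<in> carrier_mat n r"
  shows "det (transpose_mat X * X) = (\<Sum>C | C \<subseteq> {0..<n} \<and> card C = r. (det (submatrix X C UNIV))\<^sup>2)"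
proof -
  have "det (submatrix (transpose_mat X) UNIV C) = det (submatrix X C UNIV)"
    if C: "C \<subseteq> {..<n}" "card C = r" for C
  proof -
    have "pick C j < n" if "j < r" for j using pick_in_set_le[of j C] that C by auto
    then have "submatrix (transpose_mat X) UNIV C = transpose_mat (submatrix X C UNIV)"
      using X submatrix_rows_carrier[OF X C(1)] submatrix_cols_carrier[of "transpose_mat X" r n C] C
      by (intro eq_matI) (auto simp: index_submatrix_rows[OF X C(1)] index_submatrix_cols[of _ r n])
    then show ?thesis
      using submatrix_rows_carrier[OF X C(1)] C(2) by (simp add: det_transpose)
  qed
  then show ?thesis
    using X by (simp add: cauchy_binet[of _ r n] power2_eq_square atLeast0LessThan)
qed

theorem mainTheorem1:
  fixes X :: "real mat" and n r :: nat
  assumes "1 \<le> r" and "r \<le> n"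
    and "X \<in> carrier_mat n r"
    and "\<forall>k < r. (\<Sum>i < n. (X $$ (i, k))\<^sup>2) = 1"
    and "\<forall>a \<in> carrier_vec r. X *\<^sub>v a = 0\<^sub>v n \<longrightarrow> a = 0\<^sub>v r"
    and "C \<subseteq> {0..<n}" and "card C = r"
  shows "cond_prob_Y X C r = \<bar>det (submatrix X C UNIV)\<bar>\<^sup>2 / det (transpose_mat X * X)"
proof -
  have X: "X \<in> carrier_mat n r" by fact
  have "prob_card_Y X r = (\<Sum>D | D \<subseteq> {0..<n} \<and> card D = r. prob_Y X D)"
    using X by (simp add: prob_card_Y_def)
  also have "\<dots> = det (transpose_mat X * X)"
    using X by (simp add: prob_Y_eq_det_square det_gram_eq_sum_squared_minors)
  finally show ?thesis
    using assms(6,7) X by (simp add: cond_prob_Y_def prob_Y_eq_det_square)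
qed

end
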